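(* Let $(l_n)$ and $(k_n)$ be sequences of positive integers such that $$\lim_{n\to\infty}\Big(1-\frac{1}{2^{l_n}}\Big)^{k_n}=1\quad\text{and}\quad \lim_{n\to\infty}\frac{k_nl_n}{2^{l_n}}=\infty.$$ Then the sequence of functions $f_n:\{-1,1\}^{l_nk_n}\to\{-1,0,1\}$, $f_n(\omega):=\mathsf{Tribes}(l_n,k_n)(\omega)-\mathsf{Tribes}(l_n,k_n)(-\omega)$, is bribable. Moreover, there is a sequence of positive integers $a_n\to\infty$ such that $\mathbb{P}[|\mathscr{P}_n|>a_n]\to1$, where $\mathscr{P}_n$ is the pivotal set of $\mathsf{Tribes}(l_n,k_n)$.
   Context: $\{-1,1\}^{m}$ carries the uniform product measure $\mathbb{P}$, $\omega$ uniform. $\mathsf{Tribes}(l,k):\{-1,1\}^{lk}\to\{0,1\}$: the $lk$ coordinates are partitioned into $k$ disjoint blocks ("tribes") of $l$ elements each; $\mathsf{Tribes}(l,k)(\omega)=1$ if there is a tribe $T$ with $\omega(i)=1$ for all $i\in T$, and $0$ otherwise. For $i$ a coordinate, $\omega^i$ is $\omega$ with the $i$-th coordinate flipped; the pivotal set of a function $g$ is $\{i: g(\omega)\neq g(\omega^i)\}$. A function $f$ on $\{-1,1\}^m$ is transitive if there is a group of permutations of the coordinates acting transitively under which $f$ is invariant. A sequence $f_n:\{-1,1\}^{m_n}\to\{-1,0,1\}$ is called bribable if: (1) each $f_n$ is transitive; (2) $\lim_n\mathbb{P}[f_n=0]=1$; (3) $\lim_n\mathbb{P}[\exists\, i,j\in[m_n]: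 f_n(\omega^i)=1\text{ and }f_n(\omega^j)=-1]=1$. *)

theory Defs
  imports "HOL-Analysis.Analysis" "HOL-Combinatorics.Permutations"
begin

definition cube :: "nat \<Rightarrow> (nat \<Rightarrow> int) set" where
  "cube m = PiE {0..<m} (\<lambda>_. {-1, 1})"

definition cprob :: "nat \<Rightarrow> ((nat \<Rightarrow> int) \<Rightarrow> bool) \<Rightarrow> real" where
  "cprob m P = real (card {\<omega> \<in> cube m. P \<omega>}) / real (card (cube m))"

definition flip :: "(nat \<Rightarrow> int) \<Rightarrow> nat \<Rightarrow> (nat \<Rightarrow> int)" where
  "flip \<omega> i = fun_upd \<omega> i (- \<omega> i)"

definition neg :: "nat \<Rightarrow> (nat \<Rightarrow> int) \<Rightarrow> (nat \<Rightarrow> int)" where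
  "neg m \<omega> = (\<lambda>i\<in>{0..<m}. - \<omega> i)"

definition tribes :: "nat \<Rightarrow> nat \<Rightarrow> (nat \<Rightarrow> int) \<Rightarrow> int" where
  "tribes l k \<omega> = (if \<exists>j<k. \<forall>i\<in>{j*l..<(j+1)*l}. \<omega> i = 1 then 1 else 0)"

definition pivotal :: "nat \<Rightarrow> ((nat \<Rightarrow> int) \<Rightarrow> int) \<Rightarrow> (nat \<Rightarrow> int) \<Rightarrow> nat set" where
  "pivotal m g \<omega> = {i \<in> {0..<m}. g \<omega> \<noteq> g (flip \<omega> i)}"

definition transitive_fun :: "nat \<Rightarrow> ((nat \<Rightarrow> int) \<Rightarrow> int) \<Rightarrow> bool" where
  "transitive_fun m f \<longleftrightarrow>
     (\<exists>G. G \<subseteq> {\<pi>. \<pi> permutes {0..<m}} \<and> id \<in> G \<and>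
          (\<forall>\<pi>\<in>G. \<forall>\<sigma>\<in>G. \<pi> \<circ> \<sigma> \<in> G) \<and> (\<forall>\<pi>\<in>G. inv \<pi> \<in> G) \<and>
          (\<forall>i<m. \<forall>j<m. \<exists>\<pi>\<in>G. \<pi> i = j) \<and>
          (\<forall>\<pi>\<in>G. \<forall>\<omega>\<in>cube m. f (restrict (\<omega> \<circ> \<pi>) {0..<m}) = f \<omega>))"

definition bribable :: "(nat \<Rightarrow> nat) \<Rightarrow> (nat \<Rightarrow> (nat \<Rightarrow> int) \<Rightarrow> int) \<Rightarrow> bool" where
  "bribable m f \<longleftrightarrow>
     (\<forall>n. \<forall>\<omega>\<in>cube (m n). f n \<omega> \<in> {-1, 0, 1}) \<and>
     (\<forall>n. transitive_fun (m n) (f n)) \<and>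
     (\<lambda>n. cprob (m n) (\<lambda>\<omega>. f n \<omega> = 0)) \<longlonglongrightarrow> 1 \<and>
     (\<lambda>n. cprob (m n) (\<lambda>\<omega>. \<exists>i<m n. \<exists>j<m n. f n (flip \<omega> i) = 1 \<and> f n (flip \<omega> j) = -1))
        \<longlonglongrightarrow> 1"

end

(*
  The k tribes are independent blocks of l coordinates, and q = (1 - 2^-l)^k is the
  probability that no block is constantly 1 (or, by symmetry, constantly -1). Hence f
  vanishes off an event of probability at most 2 (1 - q), which tends to 0.
  Call a block almost uniform if exactly one of its coordinates differs from the others:
  flipping that coordinate makes it uniform. Blocks that are almost 1 and almost -1 both
  occur with probability at least 1 - 2 (1 - l 2^-l)^k >= 1 - 2 exp (-x), where
  x = k l 2^-l tends to infinity; if moreover no block is uniform, one flip moves f to 1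
  and another moves f to -1.
  For the pivotal set, split the blocks into about sqrt x groups of consecutive blocks. With
  high probability every group contains an almost-1 block and no block is all 1; then each
  of these blocks contains a pivotal coordinate of Tribes, so the pivotal set has at least
  about sqrt x elements.
*)

theory Submission
  imports Defs
begin

section \<open>Uniform probability on the cube\<close>

lemma finite_cube: "finite (cube m)"
  unfolding cube_def by (simp add: finite_PiE)

lemma card_cube: "card (cube m) = 2 ^ m"
  unfolding cube_def by (simp add: card_PiE numeral_2_eq_2)

lemma cprob_le_1: "cprob m P \<le> 1"
proof -
  have "card {\<omega>\<in>cube m. P \<omega>} \<le> card (cube m)"
    by (intro card_mono finite_cube) auto
  moreover have "card (cube m) > 0"
    by (simp add: card_cube)
  ultimately show ?thesis
    unfolding cprob_def by simp
qed

lemma cprob_mono: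
  assumes "\<And>\<omega>. \<omega> \<in> cube m \<Longrightarrow> P \<omega> \<Longrightarrow> Q \<omega>"
  shows "cprob m P \<le> cprob m Q"
proof -
  have "card {\<omega>\<in>cube m. P \<omega>} \<le> card {\<omega>\<in>cube m. Q \<omega>}"
    using assms by (intro card_mono) (auto simp: finite_cube)
  then show ?thesis
    unfolding cprob_def by (simp add: divide_right_mono)
qed

lemma cprob_not: "cprob m (\<lambda>\<omega>. \<not> P \<omega>) = 1 - cprob m P"
proof -
  have sub: "{\<omega>\<in>cube m. P \<omega>} \<subseteq> cube m"
    by auto
  have "{\<omega>\<in>cube m. \<not> P \<omega>} = cube m - {\<omega>\<in>cube m. P \<omega>}"
    by auto
  then have "card {\<omega>\<in>cube m. \<not> P \<omega>} = card (cube m) - card {\<omega>\<in>cube m. P \<omega>}"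
    using card_Diff_subset[OF finite_subset[OF sub finite_cube] sub] by simp
  then have "real (card {\<omega>\<in>cube m. \<not> P \<omega>}) = real (card (cube m)) - real (card {\<omega>\<in>cube m. P \<omega>})"
    using card_mono[OF finite_cube sub] by simp
  moreover have "card (cube m) > 0"
    by (simp add: card_cube)
  ultimately show ?thesis
    unfolding cprob_def by (simp add: diff_divide_distrib)
qed

lemma cprob_disj_le: "cprob m (\<lambda>\<omega>. P \<omega> \<or> Q \<omega>) \<le> cprob m P + cprob m Q"
proof -
  have "{\<omega>\<in>cube m. P \<omega> \<or> Q \<omega>} = {\<omega>\<in>cube m. P \<omega>} \<union> {\<omega>\<in>cube m. Q \<omega>}"
    by auto
  then have "card {\<omega>\<in>cube m. P \<omega> \<or> Q \<omega>} \<le> card {\<omega>\<in>cube m. P \<omega>} + card {\<omega>\<in>cube m. Q \<omega>}"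
    by (simp add: card_Un_le)
  then show ?thesis
    unfolding cprob_def by (simp add: add_divide_distrib[symmetric] divide_right_mono)
qed

lemma cprob_Ex_le: "cprob m (\<lambda>\<omega>. \<exists>g<(G::nat). P g \<omega>) \<le> (\<Sum>g<G. cprob m (P g))"
proof -
  have "{\<omega>\<in>cube m. \<exists>g<G. P g \<omega>} = (\<Union>g<G. {\<omega>\<in>cube m. P g \<omega>})"
    by auto
  also have "card \<dots> \<le> (\<Sum>g<G. card {\<omega>\<in>cube m. P g \<omega>})"
    by (rule card_UN_le) simp
  finally have "real (card {\<omega>\<in>cube m. \<exists>g<G. P g \<omega>}) \<le> (\<Sum>g<G. real (card {\<omega>\<in>cube m. P g \<omega>}))"
    unfolding of_nat_sum[symmetric] of_nat_le_iff .
  then show ?thesis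
    unfolding cprob_def sum_divide_distrib[symmetric] by (simp add: divide_right_mono)
qed

lemma cprob_conj_ge: "cprob m P + cprob m Q - 1 \<le> cprob m (\<lambda>\<omega>. P \<omega> \<and> Q \<omega>)"
proof -
  have "cprob m (\<lambda>\<omega>. \<not> (P \<omega> \<and> Q \<omega>)) \<le> cprob m (\<lambda>\<omega>. \<not> P \<omega> \<or> \<not> Q \<omega>)"
    by (rule cprob_mono) simp
  also have "\<dots> \<le> cprob m (\<lambda>\<omega>. \<not> P \<omega>) + cprob m (\<lambda>\<omega>. \<not> Q \<omega>)"
    by (rule cprob_disj_le)
  finally show ?thesis
    unfolding cprob_not by linarith
qed

section \<open>Blocks\<close>

definition block :: "nat \<Rightarrow> nat \<Rightarrow> (nat \<Rightarrow> int) \<Rightarrow> (nat \<Rightarrow> int)" where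
  "block l j \<omega> = (\<lambda>i\<in>{0..<l}. \<omega> (j * l + i))"

lemma block_index_less: "j < k \<Longrightarrow> i < l \<Longrightarrow> j * l + i < l * (k::nat)"
proof -
  assume "j < k" "i < l"
  then have "j * l + i < Suc j * l"
    by simp
  also have "\<dots> \<le> k * l"
    using \<open>j < k\<close> by (intro mult_le_mono1) simp
  finally show ?thesis
    by (simp add: mult.commute)
qed

lemma div_less_of_less_mult: "i < l * k \<Longrightarrow> i div l < (k::nat)"
  using less_mult_imp_div_less[of i k l] by (simp add: mult.commute)

lemma mod_less_of_less_mult: "i < l * k \<Longrightarrow> i mod l < (l::nat)"
  by (cases "l = 0") auto

lemma block_in_cube: "\<omega> \<in> cube (l * k) \<Longrightarrow> j < k \<Longrightarrow> block l j \<omega> \<in> cube l"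
  using block_index_less[of j k _ l] unfolding cube_def block_def by (auto simp: PiE_iff)

lemma bij_betw_blocks:
  "bij_betw (\<lambda>\<omega>. \<lambda>j\<in>{..<k}. block l j \<omega>) (cube (l * k)) (PiE {..<k} (\<lambda>_. cube l))"
proof -
  let ?split = "\<lambda>\<omega>. \<lambda>j\<in>{..<k}. block l j \<omega>"
  let ?join = "\<lambda>\<tau>. \<lambda>i\<in>{0..<l * k}. \<tau> (i div l) (i mod l)"
  show ?thesis
  proof (rule bij_betw_byWitness[where f' = ?join])
    show "\<forall>\<omega>\<in>cube (l * k). ?join (?split \<omega>) = \<omega>"
    proof
      fix \<omega> assume \<omega>: "\<omega> \<in> cube (l * k)"
      show "?join (?split \<omega>) = \<omega>"
      proof
        fix i
        show "?join (?split \<omega>) i = \<omega> i"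
        proof (cases "i < l * k")
          case True
          then show ?thesis
            using div_less_of_less_mult[OF True] mod_less_of_less_mult[OF True] by (simp add: block_def)
        next
          case False
          then show ?thesis
            using PiE_arb[OF \<omega>[unfolded cube_def], of i] by simp
        qed
      qed
    qed
    show "\<forall>\<tau>\<in>PiE {..<k} (\<lambda>_. cube l). ?split (?join \<tau>) = \<tau>"
    proof
      fix \<tau> assume \<tau>: "\<tau> \<in> PiE {..<k} (\<lambda>_. cube l)"
      have "block l j (?join \<tau>) = \<tau> j" if "j < k" for j
      proof
        fix i
        have "\<tau> j \<in> cube l"
          using \<tau> that by auto
        then have "\<tau> j i = undefined" if "\<not> i < l"
          using that by (simp add: cube_def PiE_def extensional_def)
        then show "block l j (?join \<tau>) i = \<tau> j i"
          using block_index_less[OF \<open>j < k\<close>, of i l] by (simp add: block_def)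
      qed
      then show "?split (?join \<tau>) = \<tau>"
        using PiE_arb[OF \<tau>] by auto
    qed
    show "?split ` cube (l * k) \<subseteq> PiE {..<k} (\<lambda>_. cube l)"
      by (auto simp: restrict_PiE_iff block_in_cube)
    show "?join ` PiE {..<k} (\<lambda>_. cube l) \<subseteq> cube (l * k)"
    proof (rule image_subsetI)
      fix \<tau> assume \<tau>: "\<tau> \<in> PiE {..<k} (\<lambda>_. cube l)"
      have "\<tau> (i div l) (i mod l) \<in> {-1, 1}" if "i < l * k" for i
      proof -
        have row: "\<tau> (i div l) \<in> PiE {0..<l} (\<lambda>_. {-1, 1})"
          using PiE_mem[OF \<tau>] div_less_of_less_mult[OF that] by (simp add: cube_def)
        show ?thesis
          using PiE_mem[OF row] mod_less_of_less_mult[OF that] by simp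
      qed
      then show "?join \<tau> \<in> cube (l * k)"
        by (simp add: cube_def restrict_PiE_iff)
    qed
  qed
qed

lemma card_Collect_bij_betw:
  assumes "bij_betw f A C"
  shows "card {x\<in>A. P (f x)} = card {y\<in>C. P y}"
proof -
  have "f ` {x\<in>A. P (f x)} = {y\<in>C. P y}"
    using bij_betw_imp_surj_on[OF assms] by auto
  then show ?thesis
    using bij_betw_same_card[OF bij_betw_subset[OF assms]] by auto
qed

lemma cprob_blocks: "cprob (l * k) (\<lambda>\<omega>. \<forall>j<k. Q j (block l j \<omega>)) = (\<Prod>j<k. cprob l (Q j))"
proof -
  have "card {\<omega>\<in>cube (l * k). \<forall>j<k. Q j (block l j \<omega>)}
      = card {\<tau>\<in>PiE {..<k} (\<lambda>_. cube l). \<forall>j<k. Q j (\<tau> j)}"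
    using card_Collect_bij_betw[OF bij_betw_blocks[of l k], where P = "\<lambda>\<tau>. \<forall>j<k. Q j (\<tau> j)"] by simp
  also have "{\<tau>\<in>PiE {..<k} (\<lambda>_. cube l). \<forall>j<k. Q j (\<tau> j)} = PiE {..<k} (\<lambda>j. {\<sigma>\<in>cube l. Q j \<sigma>})"
    by (auto simp: PiE_iff extensional_def)
  also have "card \<dots> = (\<Prod>j<k. card {\<sigma>\<in>cube l. Q j \<sigma>})"
    by (rule card_PiE) simp
  finally show ?thesis
    unfolding cprob_def card_cube by (simp add: power_mult prod_dividef)
qed

definition uniform :: "nat \<Rightarrow> int \<Rightarrow> (nat \<Rightarrow> int) \<Rightarrow> bool" where
  "uniform l c \<sigma> \<longleftrightarrow> (\<forall>i<l. \<sigma> i = c)"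

definition almost_uniform :: "nat \<Rightarrow> int \<Rightarrow> (nat \<Rightarrow> int) \<Rightarrow> bool" where
  "almost_uniform l c \<sigma> \<longleftrightarrow> (\<exists>t<l. \<sigma> t = - c \<and> (\<forall>i<l. i \<noteq> t \<longrightarrow> \<sigma> i = c))"

lemma cprob_uniform:
  assumes "c \<in> {-1, 1}"
  shows "cprob l (uniform l c) = 1 / 2 ^ l"
proof -
  have "{\<sigma>\<in>cube l. uniform l c \<sigma>} = {\<lambda>i\<in>{0..<l}. c}"
    using assms by (auto simp: cube_def uniform_def PiE_iff extensional_def)
  then show ?thesis
    unfolding cprob_def card_cube by simp
qed

lemma cprob_almost_uniform:
  assumes "c \<in> {-1, 1}"
  shows "cprob l (almost_uniform l c) = l / 2 ^ l"
proof -
  define \<sigma> where "\<sigma> t = (\<lambda>i\<in>{0..<l}. if i = t then - c else c)" for t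
  have "{\<sigma>\<in>cube l. almost_uniform l c \<sigma>} = \<sigma> ` {..<l}"
  proof (intro set_eqI iffI)
    fix \<tau> assume "\<tau> \<in> {\<sigma>\<in>cube l. almost_uniform l c \<sigma>}"
    then obtain t where "t < l" "\<tau> t = - c" "\<forall>i<l. i \<noteq> t \<longrightarrow> \<tau> i = c" "\<tau> \<in> cube l"
      by (auto simp: almost_uniform_def)
    then have "\<tau> = \<sigma> t"
      by (auto simp: \<sigma>_def cube_def PiE_iff extensional_def)
    then show "\<tau> \<in> \<sigma> ` {..<l}"
      using \<open>t < l\<close> by auto
  next
    fix \<tau> assume "\<tau> \<in> \<sigma> ` {..<l}"
    then show "\<tau> \<in> {\<sigma>\<in>cube l. almost_uniform l c \<sigma>}"
      using assms by (auto simp: \<sigma>_def cube_def almost_uniform_def split: if_splits)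
  qed
  moreover have "inj_on \<sigma> {..<l}"
  proof (rule inj_onI)
    fix s t assume "s \<in> {..<l}" "t \<in> {..<l}" "\<sigma> s = \<sigma> t"
    then have "\<sigma> s s = \<sigma> t s"
      by simp
    then show "s = t"
      using \<open>s \<in> {..<l}\<close> assms by (auto simp: \<sigma>_def split: if_splits)
  qed
  ultimately show ?thesis
    unfolding cprob_def card_cube by (simp add: card_image)
qed

definition has_uniform_block :: "nat \<Rightarrow> nat \<Rightarrow> int \<Rightarrow> (nat \<Rightarrow> int) \<Rightarrow> bool" where
  "has_uniform_block l k c \<omega> \<longleftrightarrow> (\<exists>j<k. uniform l c (block l j \<omega>))"

lemma cprob_no_uniform_block:
  assumes "c \<in> {-1, 1}"
  shows "cprob (l * k) (\<lambda>\<omega>. \<not> has_uniform_block l k c \<omega>) = (1 - 1 / 2 ^ l) ^ k"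
  using cprob_blocks[of l k "\<lambda>_ \<sigma>. \<not> uniform l c \<sigma>"]
  by (simp add: has_uniform_block_def cprob_not cprob_uniform[OF assms])

lemma cprob_no_almost_uniform_block:
  assumes "S \<subseteq> {..<k}" and "c \<in> {-1, 1}"
  shows "cprob (l * k) (\<lambda>\<omega>. \<forall>j\<in>S. \<not> almost_uniform l c (block l j \<omega>)) = (1 - l / 2 ^ l) ^ card S"
proof -
  have "cprob l (\<lambda>\<sigma>. j \<in> S \<longrightarrow> \<not> almost_uniform l c \<sigma>) = (if j \<in> S then 1 - l / 2 ^ l else 1)" for j
  proof -
    have "cprob l (\<lambda>_. False) = 0"
      by (simp add: cprob_def)
    then show ?thesis
      using cprob_not[of l "\<lambda>_. False"] cprob_not[of l "almost_uniform l c"]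
      by (simp add: cprob_almost_uniform[OF assms(2)])
  qed
  moreover have "(\<lambda>\<omega>. \<forall>j\<in>S. \<not> almost_uniform l c (block l j \<omega>))
      = (\<lambda>\<omega>. \<forall>j<k. j \<in> S \<longrightarrow> \<not> almost_uniform l c (block l j \<omega>))"
    using assms(1) by auto
  ultimately have "cprob (l * k) (\<lambda>\<omega>. \<forall>j\<in>S. \<not> almost_uniform l c (block l j \<omega>))
      = (\<Prod>j<k. if j \<in> S then 1 - l / 2 ^ l else 1)"
    using cprob_blocks[of l k "\<lambda>j \<sigma>. j \<in> S \<longrightarrow> \<not> almost_uniform l c \<sigma>"] by simp
  also have "\<dots> = (1 - l / 2 ^ l) ^ card S"
    using assms(1) by (simp add: prod.If_cases Int_absorb1)
  finally show ?thesis .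
qed

section \<open>Tribes and single flips\<close>

lemma Ball_atLeastLessThan_add: "(\<forall>i\<in>{a..<a + l}. P i) \<longleftrightarrow> (\<forall>t<l. P (a + t))" for a l :: nat
proof
  assume shifted: "\<forall>t<l. P (a + t)"
  show "\<forall>i\<in>{a..<a + l}. P i"
  proof
    fix i assume "i \<in> {a..<a + l}"
    then have "i - a < l" and "a + (i - a) = i"
      by auto
    then show "P i"
      using shifted by metis
  qed
qed auto

lemma tribes_eq: "tribes l k \<omega> = (if has_uniform_block l k 1 \<omega> then 1 else 0)"
proof -
  have "(\<forall>i\<in>{j * l..<(j + 1) * l}. \<omega> i = 1) \<longleftrightarrow> uniform l 1 (block l j \<omega>)" for j
    using Ball_atLeastLessThan_add[of "j * l" l] by (simp add: uniform_def block_def add.commute)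
  then show ?thesis
    by (simp add: tribes_def has_uniform_block_def)
qed

lemma tribes_neg_eq: "tribes l k (neg (l * k) \<omega>) = (if has_uniform_block l k (-1) \<omega> then 1 else 0)"
proof -
  have "uniform l 1 (block l j (neg (l * k) \<omega>)) \<longleftrightarrow> uniform l (-1) (block l j \<omega>)" if "j < k" for j
    using block_index_less[OF that] by (auto simp: uniform_def block_def neg_def)
  then have "has_uniform_block l k 1 (neg (l * k) \<omega>) \<longleftrightarrow> has_uniform_block l k (-1) \<omega>"
    by (auto simp: has_uniform_block_def)
  then show ?thesis
    by (metis tribes_eq)
qed

definition tribes_diff :: "nat \<Rightarrow> nat \<Rightarrow> (nat \<Rightarrow> int) \<Rightarrow> int" where
  "tribes_diff l k \<omega> = tribes l k \<omega> - tribes l k (neg (l * k) \<omega>)"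

lemma tribes_diff_eq:
  "tribes_diff l k \<omega> =
    (if has_uniform_block l k 1 \<omega> then 1 else 0) - (if has_uniform_block l k (-1) \<omega> then 1 else 0)"
  unfolding tribes_diff_def tribes_neg_eq by (simp add: tribes_eq)

lemma block_flip_other: "j' \<noteq> j \<Longrightarrow> t < l \<Longrightarrow> block l j' (flip \<omega> (j * l + t)) = block l j' \<omega>"
proof -
  assume "j' \<noteq> j" "t < l"
  have "j' * l + i \<noteq> j * l + t" if "i < l" for i
  proof
    assume "j' * l + i = j * l + t"
    then have "(j' * l + i) div l = (j * l + t) div l"
      by simp
    then show False
      using \<open>j' \<noteq> j\<close> \<open>t < l\<close> that by simp
  qed
  then show ?thesis
    by (auto simp: block_def flip_def)
qed

lemma block_flip_same: "t < l \<Longrightarrow> block l j (flip \<omega> (j * l + t)) = (block l j \<omega>)(t := - \<omega> (j * l + t))"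
  by (auto simp: block_def flip_def)

lemma uniform_flip_almost_uniform:
  assumes "almost_uniform l c (block l j \<omega>)"
  obtains t where "t < l" and "uniform l c (block l j (flip \<omega> (j * l + t)))"
proof -
  obtain t where t: "t < l" "block l j \<omega> t = - c" "\<forall>i<l. i \<noteq> t \<longrightarrow> block l j \<omega> i = c"
    using assms by (auto simp: almost_uniform_def)
  then have "\<omega> (j * l + t) = - c"
    by (simp add: block_def)
  then have "uniform l c (block l j (flip \<omega> (j * l + t)))"
    using t by (simp add: block_flip_same uniform_def)
  with t(1) show thesis
    using that by blast
qed

lemma tribes_diff_flip:
  assumes "j < k" and "c \<in> {-1, 1}" and "almost_uniform l c (block l j \<omega>)"
    and "\<not> has_uniform_block l k (- c) \<omega>"
  shows "\<exists>i<l * k. tribes_diff l k (flip \<omega> i) = c"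
proof -
  obtain t where t: "t < l" and unif: "uniform l c (block l j (flip \<omega> (j * l + t)))"
    using uniform_flip_almost_uniform[OF assms(3)] .
  have "has_uniform_block l k c (flip \<omega> (j * l + t))"
    using assms(1) unif by (auto simp: has_uniform_block_def)
  moreover have "\<not> uniform l (- c) (block l j' (flip \<omega> (j * l + t)))" if "j' < k" for j'
  proof (cases "j' = j")
    case True
    then show ?thesis
      using unif t assms(2) by (auto simp: uniform_def)
  next
    case False
    then show ?thesis
      using assms(4) that block_flip_other[OF False t] by (auto simp: has_uniform_block_def)
  qed
  then have "\<not> has_uniform_block l k (- c) (flip \<omega> (j * l + t))"
    by (auto simp: has_uniform_block_def)
  ultimately have "tribes_diff l k (flip \<omega> (j * l + t)) = c"
    using assms(2) by (auto simp: tribes_diff_eq)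
  then show ?thesis
    using block_index_less[OF assms(1) t] by blast
qed

lemma pivotal_in_almost_uniform_block:
  assumes "j < k" and "almost_uniform l 1 (block l j \<omega>)" and "\<not> has_uniform_block l k 1 \<omega>"
  shows "\<exists>i\<in>pivotal (l * k) (tribes l k) \<omega>. i div l = j"
proof -
  obtain t where t: "t < l" and "uniform l 1 (block l j (flip \<omega> (j * l + t)))"
    using uniform_flip_almost_uniform[OF assms(2)] .
  then have "tribes l k (flip \<omega> (j * l + t)) = 1"
    using assms(1) by (auto simp: tribes_eq has_uniform_block_def)
  moreover have "tribes l k \<omega> = 0"
    using assms(3) by (simp add: tribes_eq)
  ultimately have "j * l + t \<in> pivotal (l * k) (tribes l k) \<omega>"
    using block_index_less[OF assms(1) t] by (simp add: pivotal_def)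
  then show ?thesis
    using t by force
qed

lemma card_almost_uniform_blocks_le_card_pivotal:
  assumes "\<not> has_uniform_block l k 1 \<omega>"
  shows "card {j. j < k \<and> almost_uniform l 1 (block l j \<omega>)} \<le> card (pivotal (l * k) (tribes l k) \<omega>)"
proof -
  have "{j. j < k \<and> almost_uniform l 1 (block l j \<omega>)} \<subseteq> (\<lambda>i. i div l) ` pivotal (l * k) (tribes l k) \<omega>"
    using pivotal_in_almost_uniform_block[OF _ _ assms] by force
  moreover have "finite (pivotal (l * k) (tribes l k) \<omega>)"
    by (simp add: pivotal_def)
  ultimately show ?thesis
    by (meson card_image_le card_mono finite_imageI order_trans)
qed

lemma card_ge_if_meets_intervals:
  fixes s :: nat
  assumes "finite A" and "\<forall>g<G. \<exists>j\<in>A. g * s \<le> j \<and> j < g * s + s"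
  shows "G \<le> card A"
proof -
  obtain h where h: "\<And>g. g < G \<Longrightarrow> h g \<in> A \<and> g * s \<le> h g \<and> h g < g * s + s"
    using assms(2) by metis
  have "h g div s = g" if "g < G" for g
  proof (rule div_nat_eqI)
    show "s * g \<le> h g" and "h g < s * Suc g"
      using h[OF that] by (simp_all add: mult.commute)
  qed
  then have "inj_on h {..<G}"
    by (metis inj_onI lessThan_iff)
  moreover have "h ` {..<G} \<subseteq> A"
    using h by auto
  ultimately show ?thesis
    using card_inj_on_le[OF _ _ assms(1)] by fastforce
qed

section \<open>Probability bounds\<close>

lemma cprob_has_almost_uniform_block:
  assumes "c \<in> {-1, 1}"
  shows "cprob (l * k) (\<lambda>\<omega>. \<exists>j<k. almost_uniform l c (block l j \<omega>)) = 1 - (1 - l / 2 ^ l) ^ k"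
  using cprob_not[of "l * k" "\<lambda>\<omega>. \<exists>j<k. almost_uniform l c (block l j \<omega>)"]
    cprob_no_almost_uniform_block[of "{..<k}" k c l, OF _ assms]
  by (simp add: Ball_def)

lemma cprob_tribes_diff_eq_0_ge:
  "2 * (1 - 1 / 2 ^ l) ^ k - 1 \<le> cprob (l * k) (\<lambda>\<omega>. tribes_diff l k \<omega> = 0)"
proof -
  have "2 * (1 - 1 / 2 ^ l) ^ k - 1
      \<le> cprob (l * k) (\<lambda>\<omega>. \<not> has_uniform_block l k 1 \<omega> \<and> \<not> has_uniform_block l k (-1) \<omega>)"
    using cprob_conj_ge[of "l * k" "\<lambda>\<omega>. \<not> has_uniform_block l k 1 \<omega>" "\<lambda>\<omega>. \<not> has_uniform_block l k (-1) \<omega>"]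
    by (simp add: cprob_no_uniform_block)
  also have "\<dots> \<le> cprob (l * k) (\<lambda>\<omega>. tribes_diff l k \<omega> = 0)"
    by (rule cprob_mono) (simp add: tribes_diff_eq)
  finally show ?thesis .
qed

lemma cprob_bribe_ge:
  "2 * (1 - 1 / 2 ^ l) ^ k + 2 * (1 - (1 - l / 2 ^ l) ^ k) - 3 \<le> cprob (l * k) (\<lambda>\<omega>.
    \<exists>i<l * k. \<exists>i'<l * k. tribes_diff l k (flip \<omega> i) = 1 \<and> tribes_diff l k (flip \<omega> i') = -1)"
proof -
  let ?U = "\<lambda>c \<omega>. \<not> has_uniform_block l k c \<omega>"
  let ?A = "\<lambda>c \<omega>. \<exists>j<k. almost_uniform l c (block l j \<omega>)"
  let ?E = "\<lambda>\<omega>. \<exists>i<l * k. \<exists>i'<l * k. tribes_diff l k (flip \<omega> i) = 1 \<and> tribes_diff l k (flip \<omega> i') = -1"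
  have "2 * (1 - 1 / 2 ^ l) ^ k + 2 * (1 - (1 - l / 2 ^ l) ^ k) - 3
      \<le> cprob (l * k) (\<lambda>\<omega>. ((?U 1 \<omega> \<and> ?A (-1) \<omega>) \<and> ?U (-1) \<omega>) \<and> ?A 1 \<omega>)"
    using cprob_conj_ge[of "l * k" "?U 1" "?A (-1)"]
      cprob_conj_ge[of "l * k" "\<lambda>\<omega>. ?U 1 \<omega> \<and> ?A (-1) \<omega>" "?U (-1)"]
      cprob_conj_ge[of "l * k" "\<lambda>\<omega>. (?U 1 \<omega> \<and> ?A (-1) \<omega>) \<and> ?U (-1) \<omega>" "?A 1"]
    by (simp add: cprob_no_uniform_block cprob_has_almost_uniform_block)
  also have "\<dots> \<le> cprob (l * k) ?E"
  proof (rule cprob_mono)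
    fix \<omega> assume "((?U 1 \<omega> \<and> ?A (-1) \<omega>) \<and> ?U (-1) \<omega>) \<and> ?A 1 \<omega>"
    then obtain j j' where "j < k" "almost_uniform l 1 (block l j \<omega>)"
      and "j' < k" "almost_uniform l (-1) (block l j' \<omega>)"
      and "?U 1 \<omega>" "?U (-1) \<omega>"
      by blast
    then show "?E \<omega>"
      using tribes_diff_flip[of j k 1 l \<omega>] tribes_diff_flip[of j' k "-1" l \<omega>] by auto
  qed
  finally show ?thesis .
qed

lemma cprob_card_pivotal_ge:
  "(1 - 1 / 2 ^ l) ^ k - G * (1 - l / 2 ^ l) ^ (k div G)
    \<le> cprob (l * k) (\<lambda>\<omega>. G \<le> card (pivotal (l * k) (tribes l k) \<omega>))"
proof -
  txt \<open>The groups I g of consecutive blocks are disjoint, so an almost-1 block in each of them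
    yields G distinct pivotal coordinates.\<close>
  define s where "s = k div G"
  define I where "I g = {g * s..<g * s + s}" for g
  have I_sub: "I g \<subseteq> {..<k}" if "g < G" for g
  proof -
    have "g * s + s = Suc g * s"
      by simp
    also have "\<dots> \<le> G * s"
      using that by (intro mult_le_mono1) simp
    also have "\<dots> \<le> k"
      unfolding s_def by (simp add: mult.commute)
    finally show ?thesis
      by (auto simp: I_def)
  qed
  let ?M = "\<lambda>\<omega>. \<forall>g<G. \<exists>j\<in>I g. almost_uniform l 1 (block l j \<omega>)"
  let ?miss = "\<lambda>g \<omega>. \<forall>j\<in>I g. \<not> almost_uniform l 1 (block l j \<omega>)"
  have "cprob (l * k) (\<lambda>\<omega>. \<not> ?M \<omega>) \<le> (\<Sum>g<G. cprob (l * k) (?miss g))"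
    using cprob_Ex_le[of "l * k" G ?miss] by simp
  also have "\<dots> = G * (1 - l / 2 ^ l) ^ s"
    using cprob_no_almost_uniform_block[OF I_sub] by (simp add: I_def)
  finally have "1 - G * (1 - l / 2 ^ l) ^ s \<le> cprob (l * k) ?M"
    unfolding cprob_not by linarith
  then have "(1 - 1 / 2 ^ l) ^ k - G * (1 - l / 2 ^ l) ^ s
      \<le> cprob (l * k) (\<lambda>\<omega>. \<not> has_uniform_block l k 1 \<omega> \<and> ?M \<omega>)"
    using cprob_conj_ge[of "l * k" "\<lambda>\<omega>. \<not> has_uniform_block l k 1 \<omega>" ?M]
    by (simp add: cprob_no_uniform_block)
  also have "\<dots> \<le> cprob (l * k) (\<lambda>\<omega>. G \<le> card (pivotal (l * k) (tribes l k) \<omega>))"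
  proof (rule cprob_mono)
    fix \<omega> assume \<omega>: "\<not> has_uniform_block l k 1 \<omega> \<and> ?M \<omega>"
    have "\<exists>j\<in>{j. j < k \<and> almost_uniform l 1 (block l j \<omega>)}. g * s \<le> j \<and> j < g * s + s"
      if "g < G" for g
    proof -
      obtain j where "j \<in> I g" "almost_uniform l 1 (block l j \<omega>)"
        using \<omega> \<open>g < G\<close> by blast
      then show ?thesis
        using I_sub[OF \<open>g < G\<close>] by (auto simp: I_def)
    qed
    then have "G \<le> card {j. j < k \<and> almost_uniform l 1 (block l j \<omega>)}"
      by (intro card_ge_if_meets_intervals) auto
    also have "\<dots> \<le> card (pivotal (l * k) (tribes l k) \<omega>)"
      using card_almost_uniform_blocks_le_card_pivotal \<omega> by blast
    finally show "G \<le> card (pivotal (l * k) (tribes l k) \<omega>)" .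
  qed
  finally show ?thesis
    unfolding s_def .
qed

section \<open>Transitivity\<close>

lemma restrict_comp_permutes_in_cube:
  assumes "\<pi> permutes {0..<m}" and "\<omega> \<in> cube m"
  shows "restrict (\<omega> \<circ> \<pi>) {0..<m} \<in> cube m"
proof -
  have "\<omega> (\<pi> i) \<in> {-1, 1}" if "i \<in> {0..<m}" for i
    using PiE_mem[OF assms(2)[unfolded cube_def]] permutes_in_image[OF assms(1)] that by simp
  then show ?thesis
    by (simp add: cube_def restrict_PiE_iff)
qed

text \<open>The permutations leaving f invariant form a group, so one suitable permutation for
  each pair of coordinates suffices.\<close>

lemma transitive_funI:
  assumes "\<And>i j. i < m \<Longrightarrow> j < m \<Longrightarrow> \<exists>\<pi>. \<pi> permutes {0..<m} \<and> \<pi> i = j \<and>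
      (\<forall>\<omega>\<in>cube m. f (restrict (\<omega> \<circ> \<pi>) {0..<m}) = f \<omega>)"
  shows "transitive_fun m f"
proof -
  define G where "G = {\<pi>. \<pi> permutes {0..<m} \<and> (\<forall>\<omega>\<in>cube m. f (restrict (\<omega> \<circ> \<pi>) {0..<m}) = f \<omega>)}"
  have "id \<in> G"
    by (simp add: G_def permutes_id cube_def PiE_restrict)
  moreover have "\<pi> \<circ> \<sigma> \<in> G" if \<pi>: "\<pi> \<in> G" and \<sigma>: "\<sigma> \<in> G" for \<pi> \<sigma>
  proof -
    have "f (restrict (\<omega> \<circ> (\<pi> \<circ> \<sigma>)) {0..<m}) = f \<omega>" if \<omega>: "\<omega> \<in> cube m" for \<omega>
    proof -
      have "restrict (\<omega> \<circ> (\<pi> \<circ> \<sigma>)) {0..<m} = restrict (restrict (\<omega> \<circ> \<pi>) {0..<m} \<circ> \<sigma>) {0..<m}"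
        using permutes_in_image[of \<sigma> "{0..<m}"] \<sigma> by (auto simp: G_def)
      then show ?thesis
        using \<pi> \<sigma> \<omega> restrict_comp_permutes_in_cube by (simp add: G_def)
    qed
    then show ?thesis
      using \<pi> \<sigma> by (simp add: G_def permutes_compose)
  qed
  moreover have "inv \<pi> \<in> G" if "\<pi> \<in> G" for \<pi>
  proof -
    have \<pi>: "\<pi> permutes {0..<m}" and inv: "inv \<pi> permutes {0..<m}"
      using that permutes_inv by (auto simp: G_def)
    have "f (restrict (\<omega> \<circ> inv \<pi>) {0..<m}) = f \<omega>" if \<omega>: "\<omega> \<in> cube m" for \<omega>
    proof -
      let ?\<omega>' = "restrict (\<omega> \<circ> inv \<pi>) {0..<m}"
      have "restrict (?\<omega>' \<circ> \<pi>) {0..<m} = \<omega>"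
      proof
        fix i
        show "restrict (?\<omega>' \<circ> \<pi>) {0..<m} i = \<omega> i"
          using permutes_in_image[OF \<pi>, of i] permutes_inverses(2)[OF \<pi>, of i]
            PiE_arb[OF \<omega>[unfolded cube_def], of i]
          by simp
      qed
      then show ?thesis
        using \<open>\<pi> \<in> G\<close> restrict_comp_permutes_in_cube[OF inv \<omega>] by (auto simp: G_def)
    qed
    then show ?thesis
      using inv by (simp add: G_def)
  qed
  moreover have "\<exists>\<pi>\<in>G. \<pi> i = j" if "i < m" "j < m" for i j
    using assms[OF that] by (auto simp: G_def)
  moreover have "G \<subseteq> {\<pi>. \<pi> permutes {0..<m}}"
    and "\<forall>\<pi>\<in>G. \<forall>\<omega>\<in>cube m. f (restrict (\<omega> \<circ> \<pi>) {0..<m}) = f \<omega>"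
    by (auto simp: G_def)
  ultimately show ?thesis
    unfolding transitive_fun_def by (intro exI[of _ G]) blast
qed

definition block_perm :: "nat \<Rightarrow> nat \<Rightarrow> (nat \<Rightarrow> nat) \<Rightarrow> (nat \<Rightarrow> nat) \<Rightarrow> nat \<Rightarrow> nat" where
  "block_perm l k \<beta> \<gamma> x = (if x < l * k then \<beta> (x div l) * l + \<gamma> (x mod l) else x)"

lemma block_perm_permutes:
  assumes \<beta>: "\<beta> permutes {..<k}" and \<gamma>: "\<gamma> permutes {..<l}"
  shows "block_perm l k \<beta> \<gamma> permutes {0..<l * k}"
proof (rule bij_imp_permutes)
  have \<beta>_less: "\<beta> (x div l) < k" and \<gamma>_less: "\<gamma> (x mod l) < l" if "x < l * k" for x
    using permutes_in_image[OF \<beta>] permutes_in_image[OF \<gamma>]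
      div_less_of_less_mult[OF that] mod_less_of_less_mult[OF that]
    by auto
  have maps: "block_perm l k \<beta> \<gamma> ` {0..<l * k} \<subseteq> {0..<l * k}"
  proof (rule image_subsetI)
    fix x assume "x \<in> {0..<l * k}"
    then show "block_perm l k \<beta> \<gamma> x \<in> {0..<l * k}"
      using block_index_less[OF \<beta>_less \<gamma>_less] by (simp add: block_perm_def)
  qed
  have "inj_on (block_perm l k \<beta> \<gamma>) {0..<l * k}"
  proof (rule inj_onI)
    fix x y assume x: "x \<in> {0..<l * k}" and y: "y \<in> {0..<l * k}"
      and eq: "block_perm l k \<beta> \<gamma> x = block_perm l k \<beta> \<gamma> y"
    then have eq': "\<beta> (x div l) * l + \<gamma> (x mod l) = \<beta> (y div l) * l + \<gamma> (y mod l)"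
      by (simp add: block_perm_def)
    have "\<gamma> (x mod l) < l" and "\<gamma> (y mod l) < l"
      using \<gamma>_less x y by auto
    then have "\<beta> (x div l) = \<beta> (y div l)" and "\<gamma> (x mod l) = \<gamma> (y mod l)"
      using arg_cong[OF eq', of "\<lambda>z. z div l"] arg_cong[OF eq', of "\<lambda>z. z mod l"] by simp_all
    then have "x div l = y div l" and "x mod l = y mod l"
      using permutes_inj[OF \<beta>] permutes_inj[OF \<gamma>] by (auto dest: injD)
    then show "x = y"
      by (metis div_mult_mod_eq)
  qed
  then show "bij_betw (block_perm l k \<beta> \<gamma>) {0..<l * k} {0..<l * k}"
    using maps by (simp add: bij_betw_def endo_inj_surj)
qed (simp add: block_perm_def)

lemma permutes_lessThan_all_iff: "\<gamma> permutes {..<n} \<Longrightarrow> (\<forall>i<n. P (\<gamma> i)) \<longleftrightarrow> (\<forall>i<n. P i)"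
  using permutes_image[of \<gamma> "{..<n}"] by (metis imageE image_eqI lessThan_iff)

lemma permutes_lessThan_ex_iff: "\<gamma> permutes {..<n} \<Longrightarrow> (\<exists>i<n. P (\<gamma> i)) \<longleftrightarrow> (\<exists>i<n. P i)"
  using permutes_lessThan_all_iff[of \<gamma> n "\<lambda>i. \<not> P i"] by blast

lemma has_uniform_block_block_perm:
  assumes \<beta>: "\<beta> permutes {..<k}" and \<gamma>: "\<gamma> permutes {..<l}"
  shows "has_uniform_block l k c (restrict (\<omega> \<circ> block_perm l k \<beta> \<gamma>) {0..<l * k})
    \<longleftrightarrow> has_uniform_block l k c \<omega>"
proof -
  have "uniform l c (block l j (restrict (\<omega> \<circ> block_perm l k \<beta> \<gamma>) {0..<l * k}))
      \<longleftrightarrow> (\<forall>i<l. \<omega> (\<beta> j * l + \<gamma> i) = c)" if "j < k" for j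
    using block_index_less[OF that] by (simp add: uniform_def block_def block_perm_def)
  also have "\<dots> j \<longleftrightarrow> uniform l c (block l (\<beta> j) \<omega>)" for j
    using permutes_lessThan_all_iff[OF \<gamma>, of "\<lambda>i. \<omega> (\<beta> j * l + i) = c"]
    by (simp add: uniform_def block_def)
  finally show ?thesis
    using permutes_lessThan_ex_iff[OF \<beta>, of "\<lambda>j. uniform l c (block l j \<omega>)"]
    by (auto simp: has_uniform_block_def)
qed

lemma transitive_fun_tribes_diff: "transitive_fun (l * k) (tribes_diff l k)"
proof (rule transitive_funI)
  fix i j assume i: "i < l * k" and j: "j < l * k"
  define \<beta> where "\<beta> = Transposition.transpose (i div l) (j div l)"
  define \<gamma> where "\<gamma> = Transposition.transpose (i mod l) (j mod l)"
  have \<beta>: "\<beta> permutes {..<k}" and \<gamma>: "\<gamma> permutes {..<l}"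
    unfolding \<beta>_def \<gamma>_def using i j
    by (auto intro: permutes_swap_id div_less_of_less_mult mod_less_of_less_mult)
  have "block_perm l k \<beta> \<gamma> i = j"
    using i by (simp add: block_perm_def \<beta>_def \<gamma>_def)
  moreover have "tribes_diff l k (restrict (\<omega> \<circ> block_perm l k \<beta> \<gamma>) {0..<l * k}) = tribes_diff l k \<omega>"
    for \<omega>
    by (simp add: tribes_diff_eq has_uniform_block_block_perm[OF \<beta> \<gamma>])
  ultimately show "\<exists>\<pi>. \<pi> permutes {0..<l * k} \<and> \<pi> i = j \<and>
      (\<forall>\<omega>\<in>cube (l * k). tribes_diff l k (restrict (\<omega> \<circ> \<pi>) {0..<l * k}) = tribes_diff l k \<omega>)"
    using block_perm_permutes[OF \<beta> \<gamma>] by blast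
qed

section \<open>Asymptotics\<close>

lemma one_minus_power_le_exp:
  fixes p :: real
  assumes "p \<le> 1"
  shows "(1 - p) ^ s \<le> exp (- (p * s))"
proof -
  have "(1 - p) ^ s \<le> exp (- p) ^ s"
    using assms exp_ge_add_one_self[of "- p"] by (intro power_mono) auto
  also have "\<dots> = exp (- (p * s))"
    by (simp add: exp_of_nat_mult[symmetric] mult.commute)
  finally show ?thesis .
qed

lemma one_minus_power_tendsto_0:
  fixes p :: "nat \<Rightarrow> real"
  assumes "\<And>n. p n \<le> 1" and "filterlim (\<lambda>n. p n * k n) at_top sequentially"
  shows "(\<lambda>n. (1 - p n) ^ k n) \<longlonglongrightarrow> 0"
proof (rule tendsto_sandwich[of "\<lambda>_. 0" _ _ "\<lambda>n. exp (- (p n * k n))"])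
  show "\<forall>\<^sub>F n in sequentially. 0 \<le> (1 - p n) ^ k n"
    using assms(1) by simp
  show "\<forall>\<^sub>F n in sequentially. (1 - p n) ^ k n \<le> exp (- (p n * k n))"
    using one_minus_power_le_exp[OF assms(1)] by (intro always_eventually allI)
  have "filterlim (\<lambda>n. - (p n * k n)) at_bot sequentially"
    using assms(2) by (simp add: filterlim_uminus_at_top)
  then show "(\<lambda>n. exp (- (p n * k n))) \<longlonglongrightarrow> 0"
    by (rule filterlim_compose[OF exp_at_bot])
qed simp

lemma groups_power_le:
  fixes p y :: real and G K :: nat
  assumes "0 \<le> p" "p \<le> 1" and "1 \<le> G" "G \<le> y" and "y * y = K * p"
  shows "G * (1 - p) ^ (K div G) \<le> exp 1 * (y * exp (- y))"
proof -
  define s where "s = K div G"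
  have "K = s * G + K mod G"
    by (simp add: s_def)
  moreover have "K mod G < G"
    using assms(3) by simp
  ultimately have "K < s * G + G"
    by linarith
  then have "real K < real s * G + G"
    by (metis of_nat_add of_nat_mult of_nat_less_iff)
  then have K_less: "real K / G < s + 1"
    using assms(3) by (simp add: divide_less_eq algebra_simps)
  have y_pos: "0 < y"
    using assms(3,4) by linarith
  have "y = K * p / y"
    using assms(5) y_pos by (simp add: field_simps)
  also have "\<dots> \<le> K * p / G"
    using assms(1,3,4) by (intro divide_left_mono) auto
  also have "\<dots> = p * (K / G)"
    by simp
  also have "\<dots> \<le> p * (s + 1)"
    using K_less assms(1) by (intro mult_left_mono) auto
  finally have "- (p * s) \<le> 1 - y"
    using assms(2) by (simp add: algebra_simps)
  then have "(1 - p) ^ s \<le> exp (1 - y)"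
    using one_minus_power_le_exp[OF assms(2), of s] by (meson exp_le_cancel_iff order_trans)
  then have "G * (1 - p) ^ s \<le> y * exp (1 - y)"
    using assms(2,4) by (intro mult_mono) auto
  then show ?thesis
    by (simp add: s_def exp_diff exp_minus field_simps)
qed

lemma groups_power_tendsto_0:
  fixes p :: "nat \<Rightarrow> real"
  assumes "\<And>n. 0 \<le> p n" and "\<And>n. p n \<le> 1" and "filterlim (\<lambda>n. p n * k n) at_top sequentially"
  defines "G n \<equiv> nat \<lfloor>sqrt (p n * k n)\<rfloor>"
  shows "(\<lambda>n. G n * (1 - p n) ^ (k n div G n)) \<longlonglongrightarrow> 0"
proof -
  define y where "y n = sqrt (p n * k n)" for n
  have G_eq: "G n = nat \<lfloor>y n\<rfloor>" for n
    by (simp add: G_def y_def)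
  have y_top: "filterlim y at_top sequentially"
    unfolding y_def by (rule filterlim_compose[OF sqrt_at_top assms(3)])
  have "\<forall>\<^sub>F n in sequentially. 1 \<le> y n"
    using y_top unfolding filterlim_at_top by blast
  then have upper: "\<forall>\<^sub>F n in sequentially. G n * (1 - p n) ^ (k n div G n) \<le> exp 1 * (y n * exp (- y n))"
  proof (rule eventually_mono)
    fix n assume "1 \<le> y n"
    then have "1 \<le> \<lfloor>y n\<rfloor>"
      by (simp only: one_le_floor)
    then have "1 \<le> G n" and "G n \<le> y n"
      unfolding G_eq by (simp_all add: le_nat_iff of_nat_nat)
    moreover have "y n * y n = k n * p n"
      using assms(1) by (simp add: y_def mult.commute)
    ultimately show "G n * (1 - p n) ^ (k n div G n) \<le> exp 1 * (y n * exp (- y n))"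
      using assms(1,2) by (intro groups_power_le)
  qed
  have "((\<lambda>y::real. y * exp (- y)) \<longlongrightarrow> 0) at_top"
    using tendsto_power_div_exp_0[of 1] by (simp add: exp_minus divide_inverse)
  then have "((\<lambda>y::real. exp 1 * (y * exp (- y))) \<longlongrightarrow> 0) at_top"
    by (rule tendsto_mult_right_zero)
  then have upper_lim: "(\<lambda>n. exp 1 * (y n * exp (- y n))) \<longlonglongrightarrow> 0"
    by (rule filterlim_compose[OF _ y_top])
  have "\<forall>\<^sub>F n in sequentially. 0 \<le> G n * (1 - p n) ^ (k n div G n)"
    using assms(2) by simp
  from this upper tendsto_const upper_lim show ?thesis
    by (rule tendsto_sandwich)
qed

lemma divide_two_power_le_1: "real l / 2 ^ l \<le> 1"
proof -
  have "real l \<le> 2 ^ l"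
    using less_exp[of l] by (metis less_imp_le of_nat_le_iff of_nat_numeral of_nat_power)
  then show ?thesis
    by simp
qed

lemma cprob_tendsto_1I:
  assumes "b \<longlonglongrightarrow> 1" and "\<forall>\<^sub>F n in sequentially. b n \<le> cprob (m n) (P n)"
  shows "(\<lambda>n. cprob (m n) (P n)) \<longlonglongrightarrow> 1"
  by (rule tendsto_sandwich[OF assms(2) _ assms(1) tendsto_const]) (simp add: cprob_le_1)

lemma bribable_tribes_diff:
  fixes l k :: "nat \<Rightarrow> nat"
  assumes q: "(\<lambda>n. (1 - 1 / 2 ^ l n :: real) ^ k n) \<longlonglongrightarrow> 1"
    and r: "(\<lambda>n. (1 - l n / 2 ^ l n :: real) ^ k n) \<longlonglongrightarrow> 0"
  shows "bribable (\<lambda>n. l n * k n) (\<lambda>n. tribes_diff (l n) (k n))"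
  unfolding bribable_def
proof (intro conjI)
  show "\<forall>n. \<forall>\<omega>\<in>cube (l n * k n). tribes_diff (l n) (k n) \<omega> \<in> {-1, 0, 1}"
    by (simp add: tribes_diff_eq)
  show "\<forall>n. transitive_fun (l n * k n) (tribes_diff (l n) (k n))"
    by (simp add: transitive_fun_tribes_diff)
  have "(\<lambda>n. 2 * (1 - 1 / 2 ^ l n) ^ k n - 1 :: real) \<longlonglongrightarrow> 2 * 1 - 1"
    by (intro tendsto_intros q)
  then show "(\<lambda>n. cprob (l n * k n) (\<lambda>\<omega>. tribes_diff (l n) (k n) \<omega> = 0)) \<longlonglongrightarrow> 1"
    using cprob_tribes_diff_eq_0_ge by (intro cprob_tendsto_1I) auto
  have "(\<lambda>n. 2 * (1 - 1 / 2 ^ l n) ^ k n + 2 * (1 - (1 - l n / 2 ^ l n) ^ k n) - 3 :: real)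
      \<longlonglongrightarrow> 2 * 1 + 2 * (1 - 0) - 3"
    by (intro tendsto_intros q r)
  then show "(\<lambda>n. cprob (l n * k n) (\<lambda>\<omega>. \<exists>i<l n * k n. \<exists>j<l n * k n.
      tribes_diff (l n) (k n) (flip \<omega> i) = 1 \<and> tribes_diff (l n) (k n) (flip \<omega> j) = -1)) \<longlonglongrightarrow> 1"
    using cprob_bribe_ge by (intro cprob_tendsto_1I) auto
qed

lemma card_pivotal_tribes_tendsto:
  fixes l k :: "nat \<Rightarrow> nat"
  assumes q: "(\<lambda>n. (1 - 1 / 2 ^ l n :: real) ^ k n) \<longlonglongrightarrow> 1"
    and x: "filterlim (\<lambda>n. real (l n) / 2 ^ l n * k n) at_top sequentially"
  shows "\<exists>a :: nat \<Rightarrow> nat. (\<forall>n. a n > 0) \<and> filterlim a at_top sequentially \<and>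
    (\<lambda>n. cprob (l n * k n) (\<lambda>\<omega>. card (pivotal (l n * k n) (tribes (l n) (k n)) \<omega>) > a n)) \<longlonglongrightarrow> 1"
proof -
  define p where "p n = real (l n) / 2 ^ l n" for n
  txt \<open>About sqrt x groups, x = p * k: each group has about sqrt x / p blocks, so it misses an
    almost-1 block with probability about exp (- sqrt x), and sqrt x * exp (- sqrt x) tends to 0.\<close>
  define G where "G n = nat \<lfloor>sqrt (p n * k n)\<rfloor>" for n
  have G_top: "\<forall>\<^sub>F n in sequentially. Z \<le> G n" for Z
  proof -
    have "\<forall>\<^sub>F n in sequentially. real Z \<le> sqrt (p n * k n)"
      using filterlim_compose[OF sqrt_at_top x] unfolding p_def filterlim_at_top by blast
    then show ?thesis
    proof (rule eventually_mono)
      fix n assume "real Z \<le> sqrt (p n * k n)"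
      then have "int Z \<le> \<lfloor>sqrt (p n * k n)\<rfloor>"
        by (simp only: le_floor_iff of_int_of_nat_eq)
      then show "Z \<le> G n"
        unfolding G_def by linarith
    qed
  qed
  define a where "a n = max 1 (G n - 1)" for n
  have "\<forall>n. a n > 0"
    by (simp add: a_def less_max_iff_disj)
  moreover have "filterlim a at_top sequentially"
    unfolding filterlim_at_top
  proof
    fix Z
    show "\<forall>\<^sub>F n in sequentially. Z \<le> a n"
      using G_top[of "Z + 1"] by (rule eventually_mono) (simp add: a_def)
  qed
  moreover have "(\<lambda>n. cprob (l n * k n) (\<lambda>\<omega>. card (pivotal (l n * k n) (tribes (l n) (k n)) \<omega>) > a n))
      \<longlonglongrightarrow> 1"
  proof (rule cprob_tendsto_1I)
    have "(\<lambda>n. G n * (1 - p n) ^ (k n div G n)) \<longlonglongrightarrow> 0"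
      unfolding G_def using x
      by (intro groups_power_tendsto_0) (simp_all add: p_def divide_two_power_le_1)
    then show "(\<lambda>n. (1 - 1 / 2 ^ l n) ^ k n - G n * (1 - p n) ^ (k n div G n)) \<longlonglongrightarrow> 1"
      using tendsto_diff[OF q] by force
    show "\<forall>\<^sub>F n in sequentially. (1 - 1 / 2 ^ l n) ^ k n - G n * (1 - p n) ^ (k n div G n)
        \<le> cprob (l n * k n) (\<lambda>\<omega>. card (pivotal (l n * k n) (tribes (l n) (k n)) \<omega>) > a n)"
      using G_top[of 2]
    proof (rule eventually_mono)
      fix n assume "2 \<le> G n"
      then have "cprob (l n * k n) (\<lambda>\<omega>. G n \<le> card (pivotal (l n * k n) (tribes (l n) (k n)) \<omega>))
          \<le> cprob (l n * k n) (\<lambda>\<omega>. card (pivotal (l n * k n) (tribes (l n) (k n)) \<omega>) > a n)"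
        by (intro cprob_mono) (auto simp: a_def)
      then show "(1 - 1 / 2 ^ l n) ^ k n - G n * (1 - p n) ^ (k n div G n)
          \<le> cprob (l n * k n) (\<lambda>\<omega>. card (pivotal (l n * k n) (tribes (l n) (k n)) \<omega>) > a n)"
        using cprob_card_pivotal_ge[of "l n" "k n" "G n"] unfolding p_def by linarith
    qed
  qed
  ultimately show ?thesis
    by blast
qed

theorem proposition1:
  fixes l k :: "nat \<Rightarrow> nat"
  assumes "\<And>n. l n > 0" and "\<And>n. k n > 0"
    and "(\<lambda>n. (1 - 1 / 2 ^ l n :: real) ^ k n) \<longlonglongrightarrow> 1"
    and "filterlim (\<lambda>n. real (k n * l n) / 2 ^ l n) at_top sequentially"
  shows "bribable (\<lambda>n. l n * k n)
           (\<lambda>n \<omega>. tribes (l n) (k n) \<omega> - tribes (l n) (k n) (neg (l n * k n) \<omega>))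
       \<and> (\<exists>a :: nat \<Rightarrow> nat. (\<forall>n. a n > 0) \<and> filterlim a at_top sequentially \<and>
            (\<lambda>n. cprob (l n * k n)
                   (\<lambda>\<omega>. card (pivotal (l n * k n) (tribes (l n) (k n)) \<omega>) > a n)) \<longlonglongrightarrow> 1)"
proof -
  have "(\<lambda>n. real (k n * l n) / 2 ^ l n) = (\<lambda>n. real (l n) / 2 ^ l n * k n)"
    by (simp add: fun_eq_iff)
  then have x: "filterlim (\<lambda>n. real (l n) / 2 ^ l n * k n) at_top sequentially"
    using assms(4) by simp
  then have "(\<lambda>n. (1 - real (l n) / 2 ^ l n) ^ k n) \<longlonglongrightarrow> 0"
    by (intro one_minus_power_tendsto_0 divide_two_power_le_1)
  then have "bribable (\<lambda>n. l n * k n) (\<lambda>n. tribes_diff (l n) (k n))"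
    using assms(3) by (rule bribable_tribes_diff[rotated])
  then show ?thesis
    using card_pivotal_tribes_tendsto[OF assms(3) x] unfolding tribes_diff_def[abs_def] by blast
qed

end
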